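(* Let $\Omega=(0,1)^2$, $N\ge2$, $h=1/N$, with grid points $(ih,jh)$, $0\le i,j\le N$; vectors $Z\in\mathbb{R}^{(N+1)^2}$ are indexed by grid points, $Z_I$ denotes the components at grid points in $\Omega$ and $Z_\partial$ those on $\partial\Omega$. Let $\mathcal{L}_h$ be the five-point operator $(\mathcal{L}_hZ)_{i,j}=-h^{-2}(z_{i-1,j}+z_{i+1,j}-4z_{i,j}+z_{i,j-1}+z_{i,j+1})$ at interior grid points. Let $\Omega=\Omega_1\cup\Omega_2$ be an overlapping decomposition into subdomains whose boundaries lie on grid lines; for $i=1,2$ let $Z_i,Z_{i,I},Z_{i,\partial}$ be the components of $Z$ at grid points of $\overline{\Omega_i}$, $\Omega_i$, $\partial\Omega_i$, and $\mathcal{L}_h^{(i)}$ the five-point operator at grid points of $\Omega_i$ acting on vectors indexed by grid points of $\overline{\Omega_i}$. Let $\alpha>0$, $F,Y_d\in\mathbb{R}^{(N+1)^2}$, and let $(Y,P)$ solve $$\mathcal{L}_hY=F_I-\alpha^{-1}h^{-2}P_I,\ Y_\partial=0;\qquad \mathcal{L}_h(h^{-2}P)=Y_I-Y_{d,I},\ P_\partial=0.$$ Given $Y^{(0)},P^{(0)}$ with $Y^{(0)}_\partial=P^{(0)}_\partial=0$, for $k=0,1,2,\dots$ and $i=1,2$ (in the order $i=1$ then $i=2$) define $Y^{(2k+i)},P^{(2k+i)}$ by $$\mathcal{L}_h^{(i)}Y^{(2k+i)}_i=F_{i,I}-\alpha^{-1}h^{-2}P^{(2k+i)}_{i,I},\qquad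 \mathcal{L}_h^{(i)}(h^{-2}P^{(2k+i)}_i)=Y^{(2k+i)}_{i,I}-Y_{d,i,I},$$ $Y^{(2k+i)}_{i,\partial}=Y^{(2k+i-1)}_{i,\partial}$, $P^{(2k+i)}_{i,\partial}=P^{(2k+i-1)}_{i,\partial}$, and $Y^{(2k+i)},P^{(2k+i)}$ equal to $Y^{(2k+i-1)},P^{(2k+i-1)}$ at all grid points not in $\Omega_i$. Define $$E^{(j)}=(Y-Y^{(j)})^2+\frac{\alpha^{-1}}{h^4}(P-P^{(j)})^2$$ (componentwise squares). Consider also the Schwarz alternating method for $\mathcal{L}_hW=0$, $W_\partial=0$: $\mathcal{L}_h^{(i)}W^{(2k+i)}_i=0$, $W^{(2k+i)}_{i,\partial}=W^{(2k+i-1)}_{i,\partial}$, and $W^{(2k+i)}=W^{(2k+i-1)}$ at grid points not in $\Omega_i$. If the Schwarz alternating method for $\mathcal{L}_hW=0$, $W_\partial=0$ is convergent, then the method above for $(Y,P)$ is convergent. Moreover, if the Schwarz alternating method for $\mathcal{L}_hW=0$, $W_\partial=0$ has convergence rate $\rho_{e,d}\in(0,1)$ under the maximum norm (i.e. $\max\{W^{(2k)}\}\le\rho_{e,d}\max\{W^{(2(k-1))}\}$ for $k\ge1$ and any initial guess), then for $k=1,2,\dots$, $$\max\{E^{(2k)}\}\le\rho_{e,d}\max\{E^{(2(k-1))}\},$$ where $\max$ is taken over all components.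
   Context: The $(Y,P)$ system is the discrete first-order optimality system (control eliminated) of the five-point finite difference discretization of minimizing $\frac12\|y-y_d\|_{L^2}^2+\frac\alpha2\|u\|_{L^2}^2$ subject to $-\Delta y=f+u$ in $(0,1)^2$, $y=0$ on the boundary, with the objective approximated by the trapezoidal rule. *)

theory Defs
  imports "HOL-Analysis.Analysis"
begin

text \<open>Grid vectors: a vector Z in R^((N+1)^2) is a function of the grid indices (i,j),
  0 <= i,j <= N; values outside the grid are irrelevant.\<close>
type_synonym gvec = "nat \<Rightarrow> nat \<Rightarrow> real"

definition Omega :: "(real \<times> real) set" where
  "Omega = {(x, y). 0 < x \<and> x < 1 \<and> 0 < y \<and> y < 1}"

definition grid :: "nat \<Rightarrow> (nat \<times> nat) set" where
  "grid N = {0..N} \<times> {0..N}"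

definition pts :: "nat \<Rightarrow> (real \<times> real) set \<Rightarrow> (nat \<times> nat) set" where
  "pts N D = {(i, j) \<in> grid N. (real i / real N, real j / real N) \<in> D}"

definition grid_lines :: "nat \<Rightarrow> (real \<times> real) set" where
  "grid_lines N = {(x, y). \<exists>m::nat. x = real m / real N \<or> y = real m / real N}"

definition lap :: "real \<Rightarrow> gvec \<Rightarrow> nat \<Rightarrow> nat \<Rightarrow> real" where
  "lap h Z i j = - (Z (i - 1) j + Z (i + 1) j - 4 * Z i j + Z i (j - 1) + Z i (j + 1)) / h\<^sup>2"

definition overlapping_decomp :: "nat \<Rightarrow> (real \<times> real) set \<Rightarrow> (real \<times> real) set \<Rightarrow> bool" where
  "overlapping_decomp N O1 O2 \<longleftrightarrow>
     open O1 \<and> open O2 \<and> connected O1 \<and> connected O2 \<and>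
     O1 \<union> O2 = Omega \<and> O1 \<inter> O2 \<noteq> {} \<and>
     frontier O1 \<subseteq> grid_lines N \<and> frontier O2 \<subseteq> grid_lines N"

definition optimality_system :: "nat \<Rightarrow> real \<Rightarrow> gvec \<Rightarrow> gvec \<Rightarrow> gvec \<Rightarrow> gvec \<Rightarrow> bool" where
  "optimality_system N \<alpha> F Yd Y P \<longleftrightarrow>
     (let h = 1 / real N in
      (\<forall>(i, j) \<in> pts N Omega.
          lap h Y i j = F i j - (1 / \<alpha>) * (1 / h\<^sup>2) * P i j
        \<and> lap h (\<lambda>a b. P a b / h\<^sup>2) i j = Y i j - Yd i j)
      \<and> (\<forall>(i, j) \<in> grid N - pts N Omega. Y i j = 0 \<and> P i j = 0))"

text \<open>Subdomain used in step n >= 1: step n = 2k+i uses Omega_i (i = 1 for odd n, 2 for even n).\<close>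
definition subdom :: "nat \<Rightarrow> (real \<times> real) set \<Rightarrow> (real \<times> real) set \<Rightarrow> (real \<times> real) set" where
  "subdom n O1 O2 = (if odd n then O1 else O2)"

definition schwarz_YP ::
  "nat \<Rightarrow> real \<Rightarrow> gvec \<Rightarrow> gvec \<Rightarrow> (real \<times> real) set \<Rightarrow> (real \<times> real) set
     \<Rightarrow> (nat \<Rightarrow> gvec) \<Rightarrow> (nat \<Rightarrow> gvec) \<Rightarrow> bool" where
  "schwarz_YP N \<alpha> F Yd O1 O2 Yk Pk \<longleftrightarrow>
     (let h = 1 / real N in
      (\<forall>(i, j) \<in> grid N - pts N Omega. Yk 0 i j = 0 \<and> Pk 0 i j = 0)
      \<and> (\<forall>n \<ge> 1.
           (\<forall>(i, j) \<in> pts N (subdom n O1 O2).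
               lap h (Yk n) i j = F i j - (1 / \<alpha>) * (1 / h\<^sup>2) * Pk n i j
             \<and> lap h (\<lambda>a b. Pk n a b / h\<^sup>2) i j = Yk n i j - Yd i j)
         \<and> (\<forall>(i, j) \<in> grid N - pts N (subdom n O1 O2).
               Yk n i j = Yk (n - 1) i j \<and> Pk n i j = Pk (n - 1) i j)))"

definition schwarz_W ::
  "nat \<Rightarrow> (real \<times> real) set \<Rightarrow> (real \<times> real) set \<Rightarrow> (nat \<Rightarrow> gvec) \<Rightarrow> bool" where
  "schwarz_W N O1 O2 W \<longleftrightarrow>
     (let h = 1 / real N in
      (\<forall>(i, j) \<in> grid N - pts N Omega. W 0 i j = 0)
      \<and> (\<forall>n \<ge> 1.
           (\<forall>(i, j) \<in> pts N (subdom n O1 O2). lap h (W n) i j = 0)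
         \<and> (\<forall>(i, j) \<in> grid N - pts N (subdom n O1 O2). W n i j = W (n - 1) i j)))"

definition schwarz_W_convergent :: "nat \<Rightarrow> (real \<times> real) set \<Rightarrow> (real \<times> real) set \<Rightarrow> bool" where
  "schwarz_W_convergent N O1 O2 \<longleftrightarrow>
     (\<forall>W. schwarz_W N O1 O2 W \<longrightarrow> (\<forall>(i, j) \<in> grid N. (\<lambda>n. W n i j) \<longlonglongrightarrow> 0))"

definition gmax :: "nat \<Rightarrow> gvec \<Rightarrow> real" where
  "gmax N Z = Max ((\<lambda>(i, j). Z i j) ` grid N)"

definition schwarz_W_rate :: "nat \<Rightarrow> (real \<times> real) set \<Rightarrow> (real \<times> real) set \<Rightarrow> real \<Rightarrow> bool" where
  "schwarz_W_rate N O1 O2 \<rho> \<longleftrightarrow>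
     (\<forall>W. schwarz_W N O1 O2 W \<longrightarrow>
        (\<forall>k \<ge> 1. gmax N (W (2 * k)) \<le> \<rho> * gmax N (W (2 * (k - 1)))))"

definition errE :: "nat \<Rightarrow> real \<Rightarrow> gvec \<Rightarrow> gvec \<Rightarrow> (nat \<Rightarrow> gvec) \<Rightarrow> (nat \<Rightarrow> gvec) \<Rightarrow> nat \<Rightarrow> gvec" where
  "errE N \<alpha> Y P Yk Pk n i j =
     (Y i j - Yk n i j)\<^sup>2 + ((1 / \<alpha>) / (1 / real N) ^ 4) * (P i j - Pk n i j)\<^sup>2"

end

theory Submission
  imports Defs "Jordan_Normal_Form.Determinant"
begin

text \<open>Write \<open>e\<^sub>n = Y - Y\<^sub>n\<close> and \<open>q\<^sub>n = (P - P\<^sub>n) / h\<^sup>2\<close>, so that \<open>E\<^sub>n = e\<^sub>n\<^sup>2 + q\<^sub>n\<^sup>2 / \<alpha>\<close>.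
  On the subdomain solved in step \<open>n\<close> the error equations read \<open>L\<^sub>h e\<^sub>n = - q\<^sub>n / \<alpha>\<close> and
  \<open>L\<^sub>h q\<^sub>n = e\<^sub>n\<close>; combined with \<open>L\<^sub>h (u\<^sup>2) \<le> 2 u L\<^sub>h u\<close> the coupling terms cancel, so \<open>E\<^sub>n\<close>
  is discretely subharmonic there, while off that subdomain \<open>E\<^sub>n = E\<^sub>n\<^sub>-\<^sub>1\<close>.
  Each \<open>E\<^sub>m\<close> vanishes on the boundary of \<open>\<Omega>\<close>, so it is an admissible initial guess for
  the Schwarz method for \<open>L\<^sub>h W = 0\<close>, whose iterates \<open>W\<^sub>n\<close> exist because the discrete
  Dirichlet problems are uniquely solvable. For even \<open>m\<close> step \<open>n\<close> of that method and step
  \<open>m + n\<close> of the given one use the same subdomain, so the discrete maximum principle gives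
  \<open>E\<^sub>m\<^sub>+\<^sub>n \<le> W\<^sub>n\<close> inductively. Hence convergence and the contraction rate of \<open>W\<close> carry over to \<open>E\<close>,
  which controls \<open>Y - Y\<^sub>n\<close> and \<open>P - P\<^sub>n\<close>.\<close>

lemma linear_system_solvable_nat:
  fixes a :: "nat \<Rightarrow> nat \<Rightarrow> 'a::field" and b :: "nat \<Rightarrow> 'a"
  assumes uniq: "\<And>x. \<forall>r<n. (\<Sum>c<n. a r c * x c) = 0 \<Longrightarrow> \<forall>c<n. x c = 0"
  shows "\<exists>x. \<forall>r<n. (\<Sum>c<n. a r c * x c) = b r"
proof -
  define A where "A = mat n n (\<lambda>(r, c). a r c)"
  have A: "A \<in> carrier_mat n n" unfolding A_def by simp
  have mult_vec: "vec_index (A *\<^sub>v v) r = (\<Sum>c<n. a r c * vec_index v c)"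
    if "r < n" and "v \<in> carrier_vec n" for r v
    using that unfolding A_def by (simp add: scalar_prod_def row_def lessThan_atLeast0 mult.commute)
  have "det A \<noteq> 0"
  proof
    assume "det A = 0"
    then obtain v where v: "v \<in> carrier_vec n" "v \<noteq> 0\<^sub>v n" "A *\<^sub>v v = 0\<^sub>v n"
      using det_0_iff_vec_prod_zero_field[OF A] by auto
    have "\<forall>r<n. (\<Sum>c<n. a r c * vec_index v c) = 0"
      using v(1,3) by (metis mult_vec index_zero_vec(1))
    from uniq[OF this] have "v = 0\<^sub>v n" using v(1) by (intro eq_vecI) auto
    with v(2) show False by simp
  qed
  from det_non_zero_imp_unit[OF A this, of "()"]
  obtain B where B: "B \<in> carrier_mat n n" "A * B = 1\<^sub>m n"
    unfolding Units_def ring_mat_def by auto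
  define x where "x = B *\<^sub>v vec n b"
  have x: "x \<in> carrier_vec n" using B unfolding x_def by simp
  have "A *\<^sub>v x = vec n b"
    unfolding x_def using A B by (metis assoc_mult_mat_vec one_mult_mat_vec vec_carrier)
  then have "\<forall>r<n. (\<Sum>c<n. a r c * vec_index x c) = b r"
    using x by (metis mult_vec index_vec)
  then show ?thesis by blast
qed

lemma linear_system_solvable:
  fixes a :: "'i \<Rightarrow> 'i \<Rightarrow> 'a::field" and b :: "'i \<Rightarrow> 'a"
  assumes "finite I"
    and uniq: "\<And>x. \<forall>r\<in>I. (\<Sum>c\<in>I. a r c * x c) = 0 \<Longrightarrow> \<forall>c\<in>I. x c = 0"
  shows "\<exists>x. \<forall>r\<in>I. (\<Sum>c\<in>I. a r c * x c) = b r"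
proof -
  obtain e where e: "bij_betw e {..<card I} I"
    using ex_bij_betw_nat_finite[OF \<open>finite I\<close>] by (auto simp: lessThan_atLeast0)
  define e' where "e' = inv_into {..<card I} e"
  have e'_e: "e' (e c) = c" if "c < card I" for c
    using that e unfolding e'_def by (simp add: bij_betw_inv_into_left)
  have e_e': "e' r < card I" "e (e' r) = r" if "r \<in> I" for r
    using that e inv_into_into[of r e "{..<card I}"] bij_betw_inv_into_right[OF e that]
    unfolding e'_def bij_betw_def by auto
  have reindex: "(\<Sum>c\<in>I. f c) = (\<Sum>c<card I. f (e c))" for f :: "'i \<Rightarrow> 'a"
    by (rule sum.reindex_bij_betw[OF e, symmetric])
  have transfer: "(\<Sum>c\<in>I. a r c * x (e' c)) = (\<Sum>c<card I. a r (e c) * x c)" for r x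
    unfolding reindex by (simp add: e'_e)
  have "\<exists>x. \<forall>r<card I. (\<Sum>c<card I. a (e r) (e c) * x c) = b (e r)"
  proof (rule linear_system_solvable_nat)
    fix x assume "\<forall>r<card I. (\<Sum>c<card I. a (e r) (e c) * x c) = 0"
    then have "\<forall>r\<in>I. (\<Sum>c\<in>I. a r c * x (e' c)) = 0"
      unfolding transfer by (metis e_e')
    then have "\<forall>c\<in>I. x (e' c) = 0"
      using uniq[of "\<lambda>c. x (e' c)"] by blast
    then show "\<forall>c<card I. x c = 0"
      using e e'_e by (metis bij_betwE lessThan_iff)
  qed
  then obtain x where "\<forall>r<card I. (\<Sum>c<card I. a (e r) (e c) * x c) = b (e r)" by blast
  then have "\<forall>r\<in>I. (\<Sum>c\<in>I. a r c * x (e' c)) = b r"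
    unfolding transfer by (metis e_e')
  then show ?thesis by (auto intro!: exI[of _ "\<lambda>c. x (e' c)"])
qed

lemma lap_add: "lap h (\<lambda>a b. U a b + V a b) i j = lap h U i j + lap h V i j"
  unfolding lap_def by (simp add: algebra_simps add_divide_distrib diff_divide_distrib)

lemma lap_diff: "lap h (\<lambda>a b. U a b - V a b) i j = lap h U i j - lap h V i j"
  unfolding lap_def by (simp add: algebra_simps add_divide_distrib diff_divide_distrib)

lemma lap_scale: "lap h (\<lambda>a b. c * U a b) i j = c * lap h U i j"
  unfolding lap_def by (simp add: algebra_simps)

lemma lap_minus: "lap h (\<lambda>a b. - U a b) i j = - lap h U i j"
  using lap_scale[of h "- 1" U] by simp

lemma lap_sum: "lap h (\<lambda>a b. \<Sum>k\<in>K. U k a b) i j = (\<Sum>k\<in>K. lap h (U k) i j)"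
  unfolding lap_def
  by (simp add: sum_divide_distrib[symmetric] sum_negf sum.distrib sum_subtractf sum_distrib_left)

lemma lap_square_le: "lap h (\<lambda>a b. (u a b)\<^sup>2) i j \<le> 2 * u i j * lap h u i j"
proof -
  define D where "D = (u (i - 1) j - u i j)\<^sup>2 + (u (i + 1) j - u i j)\<^sup>2
                      + (u i (j - 1) - u i j)\<^sup>2 + (u i (j + 1) - u i j)\<^sup>2"
  have "- ((u (i - 1) j)\<^sup>2 + (u (i + 1) j)\<^sup>2 - 4 * (u i j)\<^sup>2 + (u i (j - 1))\<^sup>2 + (u i (j + 1))\<^sup>2)
      = 2 * u i j * - (u (i - 1) j + u (i + 1) j - 4 * u i j + u i (j - 1) + u i (j + 1)) - D"
    unfolding D_def by (simp add: power2_eq_square algebra_simps)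
  then have "lap h (\<lambda>a b. (u a b)\<^sup>2) i j = 2 * u i j * lap h u i j - D / h\<^sup>2"
    unfolding lap_def by (simp only: diff_divide_distrib times_divide_eq_right)
  moreover have "D / h\<^sup>2 \<ge> 0" unfolding D_def by simp
  ultimately show ?thesis by linarith
qed

lemma finite_grid: "finite (grid N)"
  by (simp add: grid_def)

lemma pts_subset_grid: "pts N D \<subseteq> grid N"
  by (auto simp: pts_def)

lemma pts_mono: "D \<subseteq> E \<Longrightarrow> pts N D \<subseteq> pts N E"
  by (auto simp: pts_def)

lemma pts_Omega_iff:
  assumes "N > 0"
  shows "(i, j) \<in> pts N Omega \<longleftrightarrow> 0 < i \<and> i < N \<and> 0 < j \<and> j < N"
  using assms by (auto simp: pts_def grid_def Omega_def field_simps)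

lemma discrete_maximum_principle:
  assumes N: "N > 0" and S: "S \<subseteq> pts N Omega" and h: "h \<noteq> 0"
    and sub: "\<forall>(i, j)\<in>S. lap h u i j \<le> 0"
    and bdry: "\<forall>(i, j)\<in>grid N - S. u i j \<le> 0"
  shows "\<forall>(i, j)\<in>grid N. u i j \<le> 0"
proof (rule ccontr)
  assume "\<not> ?thesis"
  then obtain i1 j1 where p1: "(i1, j1) \<in> grid N" "u i1 j1 > 0" by auto
  define M where "M = Max ((\<lambda>(i, j). u i j) ` grid N)"
  have le_M: "u i j \<le> M" if "(i, j) \<in> grid N" for i j
    unfolding M_def using that finite_grid by (intro Max_ge) force+
  define T where "T = {p \<in> grid N. u (fst p) (snd p) = M}"
  have "M \<in> (\<lambda>(i, j). u i j) ` grid N"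
    unfolding M_def using p1 finite_grid by (intro Max_in) auto
  then have "T \<noteq> {}" unfolding T_def by auto
  moreover have "finite T" unfolding T_def using finite_grid by simp
  \<comment> \<open>a maximiser with largest first index cannot have a maximiser as its right neighbour\<close>
  ultimately have "Max (fst ` T) \<in> fst ` T" by simp
  then obtain i0 j0 where T0: "(i0, j0) \<in> T" and i0: "i0 = Max (fst ` T)" by force
  have rightmost: "i \<le> i0" if "(i, j) \<in> T" for i j
    unfolding i0 using that \<open>finite T\<close> by (metis Max_ge finite_imageI fst_conv image_eqI)
  have g0: "(i0, j0) \<in> grid N" and u0: "u i0 j0 = M" using T0 unfolding T_def by auto
  then have "u i0 j0 > 0" using le_M[OF p1(1)] p1(2) by simp
  then have "(i0, j0) \<in> S"
    using bdry g0 by (metis (no_types, lifting) DiffI case_prod_conv not_le)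
  then have interior: "0 < i0" "i0 < N" "0 < j0" "j0 < N" and "lap h u i0 j0 \<le> 0"
    using S sub pts_Omega_iff[OF N] by auto
  then have "u (i0 - 1) j0 + u (i0 + 1) j0 - 4 * u i0 j0 + u i0 (j0 - 1) + u i0 (j0 + 1) \<ge> 0"
    using h unfolding lap_def by (simp add: divide_le_0_iff)
  moreover have "u (i0 - 1) j0 \<le> M" "u (i0 + 1) j0 \<le> M" "u i0 (j0 - 1) \<le> M" "u i0 (j0 + 1) \<le> M"
    using interior by (auto intro!: le_M simp: grid_def)
  ultimately have "u (i0 + 1) j0 = M" using u0 by linarith
  then have "(i0 + 1, j0) \<in> T" unfolding T_def using interior by (auto simp: grid_def)
  then show False using rightmost by force
qed

lemma discrete_harmonic_eq_zero:
  assumes "N > 0" and "S \<subseteq> pts N Omega" and "h \<noteq> 0"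
    and harm: "\<forall>(i, j)\<in>S. lap h u i j = 0"
    and bdry: "\<forall>(i, j)\<in>grid N - S. u i j = 0"
  shows "\<forall>(i, j)\<in>grid N. u i j = 0"
proof -
  have "\<forall>(i, j)\<in>grid N. u i j \<le> 0"
    by (rule discrete_maximum_principle[OF assms(1-3)]) (use harm bdry in force)+
  moreover have "\<forall>(i, j)\<in>grid N. - u i j \<le> 0"
  proof (rule discrete_maximum_principle[OF assms(1-3)])
    show "\<forall>(i, j)\<in>S. lap h (\<lambda>a b. - u a b) i j \<le> 0"
      using harm by (force simp: lap_minus)
    show "\<forall>(i, j)\<in>grid N - S. - u i j \<le> 0" using bdry by (simp add: Ball_def)
  qed
  ultimately show ?thesis by force
qed

lemma dirichlet_problem_solvable:
  assumes N: "N > 0" and S: "S \<subseteq> pts N Omega" and h: "h \<noteq> 0"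
  shows "\<exists>u. (\<forall>(i, j)\<in>S. lap h u i j = 0) \<and> (\<forall>(i, j)\<in>grid N - S. u i j = g i j)"
proof -
  have "finite S" using S pts_subset_grid finite_grid by (meson finite_subset)
  define \<delta> where "\<delta> p a b = (if (a, b) = p then 1 else 0 :: real)" for p :: "nat \<times> nat" and a b
  define ext where "ext x a b = (\<Sum>p\<in>S. x p * \<delta> p a b)" for x :: "nat \<times> nat \<Rightarrow> real" and a b
  define G where "G a b = (if (a, b) \<in> S then 0 else g a b)" for a b
  have ext_at: "ext x a b = (if (a, b) \<in> S then x (a, b) else 0)" for x a b
    using \<open>finite S\<close> unfolding ext_def \<delta>_def by (simp add: if_distrib cong: if_cong)
  have lap_ext: "lap h (ext x) i j = (\<Sum>p\<in>S. lap h (\<delta> p) i j * x p)" for x i j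
    unfolding ext_def by (simp add: lap_sum lap_scale mult.commute)
  have "\<exists>x. \<forall>p\<in>S. (\<Sum>q\<in>S. lap h (\<delta> q) (fst p) (snd p) * x q) = - lap h G (fst p) (snd p)"
  proof (rule linear_system_solvable[OF \<open>finite S\<close>])
    fix x assume "\<forall>p\<in>S. (\<Sum>q\<in>S. lap h (\<delta> q) (fst p) (snd p) * x q) = 0"
    then have "\<forall>(i, j)\<in>S. lap h (ext x) i j = 0" by (auto simp: lap_ext)
    moreover have "\<forall>(i, j)\<in>grid N - S. ext x i j = 0" by (auto simp: ext_at)
    ultimately have zero: "\<forall>(i, j)\<in>grid N. ext x i j = 0"
      by (rule discrete_harmonic_eq_zero[OF N S h])
    show "\<forall>p\<in>S. x p = 0"
    proof
      fix p assume "p \<in> S"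
      moreover have "p \<in> grid N" using \<open>p \<in> S\<close> S pts_subset_grid by blast
      ultimately show "x p = 0" using zero by (auto simp: ext_at case_prod_unfold)
    qed
  qed
  then obtain x
    where x: "\<forall>p\<in>S. (\<Sum>q\<in>S. lap h (\<delta> q) (fst p) (snd p) * x q) = - lap h G (fst p) (snd p)"
    by blast
  show ?thesis
  proof (intro exI conjI)
    show "\<forall>(i, j)\<in>S. lap h (\<lambda>a b. ext x a b + G a b) i j = 0"
      using x by (auto simp: lap_add lap_ext)
    show "\<forall>(i, j)\<in>grid N - S. ext x i j + G i j = g i j"
      by (auto simp: ext_at G_def)
  qed
qed

lemma error_subharmonic:
  fixes Y P Yn Pn F Yd :: gvec
  assumes \<alpha>: "\<alpha> > 0" and h: "h \<noteq> 0"
    and Y: "lap h Y i j = F i j - (1 / \<alpha>) * (1 / h\<^sup>2) * P i j"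
    and P: "lap h (\<lambda>a b. P a b / h\<^sup>2) i j = Y i j - Yd i j"
    and Yn: "lap h Yn i j = F i j - (1 / \<alpha>) * (1 / h\<^sup>2) * Pn i j"
    and Pn: "lap h (\<lambda>a b. Pn a b / h\<^sup>2) i j = Yn i j - Yd i j"
  shows "lap h (\<lambda>a b. (Y a b - Yn a b)\<^sup>2 + ((1 / \<alpha>) / h ^ 4) * (P a b - Pn a b)\<^sup>2) i j \<le> 0"
proof -
  define e where "e a b = Y a b - Yn a b" for a b
  define q where "q a b = P a b / h\<^sup>2 - Pn a b / h\<^sup>2" for a b
  have lap_e: "lap h e i j = - q i j / \<alpha>"
    unfolding e_def q_def lap_diff Y Yn using h \<alpha> by (simp add: field_simps)
  have lap_q: "lap h q i j = e i j"
    unfolding e_def q_def lap_diff P Pn by simp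
  have "(\<lambda>a b. (Y a b - Yn a b)\<^sup>2 + ((1 / \<alpha>) / h ^ 4) * (P a b - Pn a b)\<^sup>2)
      = (\<lambda>a b. (e a b)\<^sup>2 + (1 / \<alpha>) * (q a b)\<^sup>2)"
    using h by (intro ext) (simp add: e_def q_def power2_eq_square eval_nat_numeral field_simps)
  then have "lap h (\<lambda>a b. (Y a b - Yn a b)\<^sup>2 + ((1 / \<alpha>) / h ^ 4) * (P a b - Pn a b)\<^sup>2) i j
      = lap h (\<lambda>a b. (e a b)\<^sup>2) i j + (1 / \<alpha>) * lap h (\<lambda>a b. (q a b)\<^sup>2) i j"
    by (simp only: lap_add lap_scale)
  also have "\<dots> \<le> 2 * e i j * lap h e i j + (1 / \<alpha>) * (2 * q i j * lap h q i j)"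
    using \<alpha> by (intro add_mono mult_left_mono lap_square_le) auto
  also have "\<dots> = 0"
    unfolding lap_e lap_q by (simp add: field_simps)
  finally show ?thesis .
qed

definition dirichlet_solution :: "nat \<Rightarrow> (real \<times> real) set \<Rightarrow> gvec \<Rightarrow> gvec" where
  "dirichlet_solution N D g = (SOME u. (\<forall>(i, j)\<in>pts N D. lap (1 / real N) u i j = 0)
                                     \<and> (\<forall>(i, j)\<in>grid N - pts N D. u i j = g i j))"

lemma dirichlet_solution_spec:
  assumes "N > 0" and "D \<subseteq> Omega"
  shows "\<forall>(i, j)\<in>pts N D. lap (1 / real N) (dirichlet_solution N D g) i j = 0"
    and "\<forall>(i, j)\<in>grid N - pts N D. dirichlet_solution N D g i j = g i j"
proof -
  have "\<exists>u. (\<forall>(i, j)\<in>pts N D. lap (1 / real N) u i j = 0)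
           \<and> (\<forall>(i, j)\<in>grid N - pts N D. u i j = g i j)"
    using assms by (intro dirichlet_problem_solvable pts_mono) auto
  from someI_ex[OF this]
  show "\<forall>(i, j)\<in>pts N D. lap (1 / real N) (dirichlet_solution N D g) i j = 0"
    and "\<forall>(i, j)\<in>grid N - pts N D. dirichlet_solution N D g i j = g i j"
    unfolding dirichlet_solution_def by blast+
qed

lemma subdom_subset: "O1 \<subseteq> Omega \<Longrightarrow> O2 \<subseteq> Omega \<Longrightarrow> subdom n O1 O2 \<subseteq> Omega"
  by (simp add: subdom_def)

lemma subdom_add_even: "even m \<Longrightarrow> subdom (m + n) O1 O2 = subdom n O1 O2"
  by (simp add: subdom_def)

fun schwarz_iterates ::
  "nat \<Rightarrow> (real \<times> real) set \<Rightarrow> (real \<times> real) set \<Rightarrow> gvec \<Rightarrow> nat \<Rightarrow> gvec" where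
  "schwarz_iterates N O1 O2 V 0 = V"
| "schwarz_iterates N O1 O2 V (Suc n) =
     dirichlet_solution N (subdom (Suc n) O1 O2) (schwarz_iterates N O1 O2 V n)"

lemma schwarz_W_schwarz_iterates:
  assumes "N > 0" and "O1 \<subseteq> Omega" and "O2 \<subseteq> Omega"
    and "\<forall>(i, j)\<in>grid N - pts N Omega. V i j = 0"
  shows "schwarz_W N O1 O2 (schwarz_iterates N O1 O2 V)"
  unfolding schwarz_W_def Let_def
proof (intro conjI allI impI)
  show "\<forall>(i, j)\<in>grid N - pts N Omega. schwarz_iterates N O1 O2 V 0 i j = 0"
    using assms(4) by simp
  fix n :: nat assume "1 \<le> n"
  then obtain m where n: "n = Suc m" by (cases n) auto
  note dirichlet_solution_spec[OF assms(1) subdom_subset[OF assms(2,3)],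
      of n "schwarz_iterates N O1 O2 V m"]
  then show "\<forall>(i, j)\<in>pts N (subdom n O1 O2). lap (1 / real N) (schwarz_iterates N O1 O2 V n) i j = 0"
    and "\<forall>(i, j)\<in>grid N - pts N (subdom n O1 O2).
           schwarz_iterates N O1 O2 V n i j = schwarz_iterates N O1 O2 V (n - 1) i j"
    using n by simp_all
qed

lemma optimality_systemD:
  assumes "optimality_system N \<alpha> F Yd Y P"
  shows "(i, j) \<in> pts N Omega \<Longrightarrow>
           lap (1 / real N) Y i j = F i j - (1 / \<alpha>) * (1 / (1 / real N)\<^sup>2) * P i j
         \<and> lap (1 / real N) (\<lambda>a b. P a b / (1 / real N)\<^sup>2) i j = Y i j - Yd i j"
    and "(i, j) \<in> grid N - pts N Omega \<Longrightarrow> Y i j = 0 \<and> P i j = 0"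
  using assms unfolding optimality_system_def Let_def by blast+

lemma schwarz_YPD:
  assumes "schwarz_YP N \<alpha> F Yd O1 O2 Yk Pk"
  shows "(i, j) \<in> grid N - pts N Omega \<Longrightarrow> Yk 0 i j = 0 \<and> Pk 0 i j = 0"
    and "n \<ge> 1 \<Longrightarrow> (i, j) \<in> pts N (subdom n O1 O2) \<Longrightarrow>
           lap (1 / real N) (Yk n) i j = F i j - (1 / \<alpha>) * (1 / (1 / real N)\<^sup>2) * Pk n i j
         \<and> lap (1 / real N) (\<lambda>a b. Pk n a b / (1 / real N)\<^sup>2) i j = Yk n i j - Yd i j"
    and "n \<ge> 1 \<Longrightarrow> (i, j) \<in> grid N - pts N (subdom n O1 O2) \<Longrightarrow>
           Yk n i j = Yk (n - 1) i j \<and> Pk n i j = Pk (n - 1) i j"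
  using assms unfolding schwarz_YP_def Let_def by blast+

lemma schwarz_YP_boundary:
  assumes YP: "schwarz_YP N \<alpha> F Yd O1 O2 Yk Pk"
    and "O1 \<subseteq> Omega" and "O2 \<subseteq> Omega" and ij: "(i, j) \<in> grid N - pts N Omega"
  shows "Yk n i j = 0 \<and> Pk n i j = 0"
proof (induction n)
  case 0
  show ?case using schwarz_YPD(1)[OF YP ij] .
next
  case (Suc n)
  have "(i, j) \<in> grid N - pts N (subdom (Suc n) O1 O2)"
    using ij pts_mono[OF subdom_subset[OF assms(2,3)]] by blast
  with schwarz_YPD(3)[OF YP] Suc show ?case by simp
qed

lemma errE_subharmonic:
  assumes \<alpha>: "\<alpha> > 0" and N: "N > 0" and O: "O1 \<subseteq> Omega" "O2 \<subseteq> Omega"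
    and opt: "optimality_system N \<alpha> F Yd Y P" and YP: "schwarz_YP N \<alpha> F Yd O1 O2 Yk Pk"
    and n: "n \<ge> 1" and ij: "(i, j) \<in> pts N (subdom n O1 O2)"
  shows "lap (1 / real N) (errE N \<alpha> Y P Yk Pk n) i j \<le> 0"
proof -
  define h where "h = 1 / real N"
  have h: "h \<noteq> 0" using N h_def by simp
  have "(i, j) \<in> pts N Omega" using ij pts_mono[OF subdom_subset[OF O]] by blast
  note Y = optimality_systemD(1)[OF opt this, folded h_def]
  note Yn = schwarz_YPD(2)[OF YP n ij, folded h_def]
  show ?thesis
    unfolding h_def[symmetric] errE_def
    by (rule error_subharmonic[OF \<alpha> h]) (use Y Yn in auto)
qed

lemma errE_eq_prev:
  assumes "schwarz_YP N \<alpha> F Yd O1 O2 Yk Pk"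
    and "n \<ge> 1" and "(i, j) \<in> grid N - pts N (subdom n O1 O2)"
  shows "errE N \<alpha> Y P Yk Pk n i j = errE N \<alpha> Y P Yk Pk (n - 1) i j"
  using schwarz_YPD(3)[OF assms] by (simp add: errE_def)

lemma errE_le_schwarz_iterates:
  assumes N: "N > 0" and \<alpha>: "\<alpha> > 0" and O: "O1 \<subseteq> Omega" "O2 \<subseteq> Omega"
    and opt: "optimality_system N \<alpha> F Yd Y P" and YP: "schwarz_YP N \<alpha> F Yd O1 O2 Yk Pk"
    and "even m"
  shows "\<forall>(i, j)\<in>grid N. errE N \<alpha> Y P Yk Pk (m + n) i j
                          \<le> schwarz_iterates N O1 O2 (errE N \<alpha> Y P Yk Pk m) n i j"
proof (induction n)
  case 0
  show ?case by simp
next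
  case (Suc n)
  define D where "D = subdom (Suc n) O1 O2"
  have D_eq: "subdom (m + Suc n) O1 O2 = D"
    unfolding D_def by (rule subdom_add_even[OF \<open>even m\<close>])
  have D_sub: "D \<subseteq> Omega"
    unfolding D_def by (rule subdom_subset[OF O])
  define E where "E = errE N \<alpha> Y P Yk Pk"
  define W where "W = schwarz_iterates N O1 O2 (E m)"
  have W_Suc: "W (Suc n) = dirichlet_solution N D (W n)" unfolding W_def D_def by simp
  note W_step = dirichlet_solution_spec[OF N D_sub, of "W n", folded W_Suc]
  define u where "u a b = E (m + Suc n) a b - W (Suc n) a b" for a b
  have "\<forall>(i, j)\<in>grid N. u i j \<le> 0"
  proof (rule discrete_maximum_principle[OF N pts_mono[OF D_sub]])
    show "\<forall>(i, j)\<in>pts N D. lap (1 / real N) u i j \<le> 0"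
    proof (intro ballI, clarify)
      fix i j assume ij: "(i, j) \<in> pts N D"
      have "lap (1 / real N) (E (m + Suc n)) i j \<le> 0"
        using errE_subharmonic[OF \<alpha> N O opt YP _ ij[folded D_eq]] unfolding E_def by simp
      moreover have "lap (1 / real N) (W (Suc n)) i j = 0" using W_step(1) ij by auto
      ultimately show "lap (1 / real N) u i j \<le> 0" unfolding u_def lap_diff by simp
    qed
    show "\<forall>(i, j)\<in>grid N - pts N D. u i j \<le> 0"
    proof (intro ballI, clarify)
      fix i j assume ij: "(i, j) \<in> grid N" "(i, j) \<notin> pts N D"
      have "E (m + Suc n) i j = E (m + n) i j"
        using errE_eq_prev[OF YP, of "m + Suc n" i j] ij D_eq unfolding E_def by simp
      moreover have "W (Suc n) i j = W n i j" using W_step(2) ij by auto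
      moreover have "E (m + n) i j \<le> W n i j" using Suc ij(1) unfolding E_def W_def by auto
      ultimately show "u i j \<le> 0" unfolding u_def by simp
    qed
  qed (use N in simp)
  then show ?case unfolding u_def E_def W_def by auto
qed

lemma schwarz_W_dominates_errE:
  assumes N: "N > 0" and \<alpha>: "\<alpha> > 0" and O: "O1 \<subseteq> Omega" "O2 \<subseteq> Omega"
    and opt: "optimality_system N \<alpha> F Yd Y P" and YP: "schwarz_YP N \<alpha> F Yd O1 O2 Yk Pk"
    and "even m"
  shows "\<exists>W. schwarz_W N O1 O2 W \<and> W 0 = errE N \<alpha> Y P Yk Pk m
             \<and> (\<forall>n. \<forall>(i, j)\<in>grid N. errE N \<alpha> Y P Yk Pk (m + n) i j \<le> W n i j)"
proof (intro exI conjI)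
  have "\<forall>(i, j)\<in>grid N - pts N Omega. errE N \<alpha> Y P Yk Pk m i j = 0"
    using optimality_systemD(2)[OF opt] schwarz_YP_boundary[OF YP O] by (auto simp: errE_def)
  then show "schwarz_W N O1 O2 (schwarz_iterates N O1 O2 (errE N \<alpha> Y P Yk Pk m))"
    by (rule schwarz_W_schwarz_iterates[OF N O])
  show "\<forall>n. \<forall>(i, j)\<in>grid N. errE N \<alpha> Y P Yk Pk (m + n) i j
               \<le> schwarz_iterates N O1 O2 (errE N \<alpha> Y P Yk Pk m) n i j"
    using errE_le_schwarz_iterates[OF N \<alpha> O opt YP \<open>even m\<close>] by blast
qed simp

lemma errE_nonneg: "\<alpha> > 0 \<Longrightarrow> 0 \<le> errE N \<alpha> Y P Yk Pk n i j"
  by (simp add: errE_def)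

lemma tendsto_of_square_dist_le:
  fixes x :: "nat \<Rightarrow> real"
  assumes "\<And>n. (x n - l)\<^sup>2 \<le> e n" and "e \<longlonglongrightarrow> 0"
  shows "x \<longlonglongrightarrow> l"
proof -
  have "(\<lambda>n. x n - l) \<longlonglongrightarrow> 0"
  proof (rule Lim_null_comparison)
    show "\<forall>\<^sub>F n in sequentially. norm (x n - l) \<le> sqrt (e n)"
      using real_sqrt_le_mono[OF assms(1)] by (simp add: always_eventually)
    show "(\<lambda>n. sqrt (e n)) \<longlonglongrightarrow> 0"
      using tendsto_real_sqrt[OF assms(2)] by simp
  qed
  then show ?thesis by (rule Lim_null[THEN iffD2])
qed

lemma tendsto_of_errE_tendsto_zero:
  assumes "N > 0" and "\<alpha> > 0" and E: "(\<lambda>n. errE N \<alpha> Y P Yk Pk n i j) \<longlonglongrightarrow> 0"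
  shows "(\<lambda>n. Yk n i j) \<longlonglongrightarrow> Y i j" and "(\<lambda>n. Pk n i j) \<longlonglongrightarrow> P i j"
proof -
  define c where "c = (1 / \<alpha>) / (1 / real N) ^ 4"
  have "c > 0" unfolding c_def using assms by simp
  have errE_eq: "errE N \<alpha> Y P Yk Pk n i j = (Yk n i j - Y i j)\<^sup>2 + c * (Pk n i j - P i j)\<^sup>2" for n
    unfolding errE_def c_def by (simp add: power2_commute)
  show "(\<lambda>n. Yk n i j) \<longlonglongrightarrow> Y i j"
    by (rule tendsto_of_square_dist_le[OF _ E]) (use \<open>c > 0\<close> in \<open>simp add: errE_eq\<close>)
  show "(\<lambda>n. Pk n i j) \<longlonglongrightarrow> P i j"
  proof (rule tendsto_of_square_dist_le)
    show "(Pk n i j - P i j)\<^sup>2 \<le> errE N \<alpha> Y P Yk Pk n i j / c" for n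
      using \<open>c > 0\<close> by (simp add: errE_eq field_simps)
    show "(\<lambda>n. errE N \<alpha> Y P Yk Pk n i j / c) \<longlonglongrightarrow> 0"
      using tendsto_divide_zero[OF E] by simp
  qed
qed

lemma gmax_mono:
  assumes "\<forall>(i, j)\<in>grid N. f i j \<le> g i j"
  shows "gmax N f \<le> gmax N g"
proof -
  have "grid N \<noteq> {}" by (auto simp: grid_def)
  then have "gmax N f \<in> (\<lambda>(i, j). f i j) ` grid N"
    unfolding gmax_def using finite_grid by (intro Max_in) auto
  then obtain i j where ij: "(i, j) \<in> grid N" "gmax N f = f i j" by auto
  have "g i j \<le> gmax N g" unfolding gmax_def using ij finite_grid by (intro Max_ge) force+
  then show ?thesis using ij assms by auto
qed

lemma schwarz_YP_convergent:
  assumes N: "N > 0" and \<alpha>: "\<alpha> > 0" and O: "O1 \<subseteq> Omega" "O2 \<subseteq> Omega"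
    and opt: "optimality_system N \<alpha> F Yd Y P" and YP: "schwarz_YP N \<alpha> F Yd O1 O2 Yk Pk"
    and conv: "schwarz_W_convergent N O1 O2" and ij: "(i, j) \<in> grid N"
  shows "(\<lambda>n. Yk n i j) \<longlonglongrightarrow> Y i j \<and> (\<lambda>n. Pk n i j) \<longlonglongrightarrow> P i j"
proof -
  obtain W where W: "schwarz_W N O1 O2 W"
    and le: "\<forall>n. \<forall>(i, j)\<in>grid N. errE N \<alpha> Y P Yk Pk n i j \<le> W n i j"
    using schwarz_W_dominates_errE[OF N \<alpha> O opt YP, of 0] by auto
  have W_lim: "(\<lambda>n. W n i j) \<longlonglongrightarrow> 0"
    using conv W ij unfolding schwarz_W_convergent_def by auto
  have "(\<lambda>n. errE N \<alpha> Y P Yk Pk n i j) \<longlonglongrightarrow> 0"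
    by (rule tendsto_sandwich[OF _ _ tendsto_const W_lim])
       (use le[rule_format, OF ij] errE_nonneg[OF \<alpha>] in auto)
  then show ?thesis using tendsto_of_errE_tendsto_zero[OF N \<alpha>] by blast
qed

lemma errE_contraction:
  assumes N: "N > 0" and \<alpha>: "\<alpha> > 0" and O: "O1 \<subseteq> Omega" "O2 \<subseteq> Omega"
    and opt: "optimality_system N \<alpha> F Yd Y P" and YP: "schwarz_YP N \<alpha> F Yd O1 O2 Yk Pk"
    and rate: "schwarz_W_rate N O1 O2 \<rho>" and "k \<ge> 1"
  shows "gmax N (errE N \<alpha> Y P Yk Pk (2 * k))
           \<le> \<rho> * gmax N (errE N \<alpha> Y P Yk Pk (2 * (k - 1)))"
proof -
  obtain W where W: "schwarz_W N O1 O2 W" "W 0 = errE N \<alpha> Y P Yk Pk (2 * (k - 1))"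
    and le: "\<forall>n. \<forall>(i, j)\<in>grid N. errE N \<alpha> Y P Yk Pk (2 * (k - 1) + n) i j \<le> W n i j"
    using schwarz_W_dominates_errE[OF N \<alpha> O opt YP, of "2 * (k - 1)"] by auto
  have k: "2 * k = 2 * (k - 1) + 2" using \<open>k \<ge> 1\<close> by simp
  have "gmax N (errE N \<alpha> Y P Yk Pk (2 * k)) \<le> gmax N (W 2)"
    unfolding k by (rule gmax_mono[OF spec[OF le, of 2]])
  also have "\<dots> \<le> \<rho> * gmax N (W 0)"
    using rate W(1) unfolding schwarz_W_rate_def
    by (metis mult_1_right diff_self_eq_0 mult_0_right order_refl)
  finally show ?thesis unfolding W(2) .
qed

theorem theorem4p2:
  fixes N :: nat and \<alpha> :: real and F Yd Y P :: gvec
    and O1 O2 :: "(real \<times> real) set" and Yk Pk :: "nat \<Rightarrow> gvec"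
  assumes "N \<ge> 2" and "\<alpha> > 0"
    and "overlapping_decomp N O1 O2"
    and "optimality_system N \<alpha> F Yd Y P"
    and "schwarz_YP N \<alpha> F Yd O1 O2 Yk Pk"
  shows "(schwarz_W_convergent N O1 O2 \<longrightarrow>
            (\<forall>(i, j) \<in> grid N. (\<lambda>n. Yk n i j) \<longlonglongrightarrow> Y i j \<and> (\<lambda>n. Pk n i j) \<longlonglongrightarrow> P i j))
       \<and> (\<forall>\<rho>. 0 < \<rho> \<and> \<rho> < 1 \<and> schwarz_W_rate N O1 O2 \<rho> \<longrightarrow>
            (\<forall>k \<ge> 1. gmax N (errE N \<alpha> Y P Yk Pk (2 * k))
                        \<le> \<rho> * gmax N (errE N \<alpha> Y P Yk Pk (2 * (k - 1)))))"
proof -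
  have N: "N > 0" using assms(1) by simp
  have O: "O1 \<subseteq> Omega" "O2 \<subseteq> Omega" using assms(3) unfolding overlapping_decomp_def by auto
  note convergent = schwarz_YP_convergent[OF N assms(2) O assms(4,5)]
  note contraction = errE_contraction[OF N assms(2) O assms(4,5)]
  show ?thesis
  proof (intro conjI impI allI ballI, clarify)
    fix i j assume "schwarz_W_convergent N O1 O2" and "(i, j) \<in> grid N"
    then show "(\<lambda>n. Yk n i j) \<longlonglongrightarrow> Y i j \<and> (\<lambda>n. Pk n i j) \<longlonglongrightarrow> P i j"
      by (rule convergent)
  next
    fix \<rho> :: real and k :: nat
    assume "0 < \<rho> \<and> \<rho> < 1 \<and> schwarz_W_rate N O1 O2 \<rho>" and "1 \<le> k"
    then show "gmax N (errE N \<alpha> Y P Yk Pk (2 * k))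
                 \<le> \<rho> * gmax N (errE N \<alpha> Y P Yk Pk (2 * (k - 1)))"
      using contraction by blast
  qed
qed

end
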